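(* Let $\pi:\mathfrak H\to\mathfrak H/\mathcal I\cong\Lambda$ be the augmentation. Then $\pi(\mathrm{Fitt}_{\mathfrak H}(\mathcal I))=\mathrm{Fitt}_\Lambda(I/I^2)\subseteq(\xi)$ as ideals of $\Lambda$.
   Context: Fix a prime $p\ge5$, an integer $N\ge1$ with $p\nmid N\varphi(N)$, $\omega$ the Teichmüller character, $\theta$ an even character of $(\mathbb Z/Np\mathbb Z)^\times$ with $\chi=\omega^{-1}\theta$, satisfying: (a) $\theta$ primitive of modulus $Np$; (b) if $\chi|_{(\mathbb Z/p)^\times}=1$ then $\chi|_{(\mathbb Z/N)^\times}(p)\ne1$; (c) if $N=1$ then $\theta\ne\omega^2$. $\Lambda=\mathbb Z_p[[\mathbb Z_{p,N}^\times]]_\theta$ with $\mathbb Z_{p,N}=\varprojlim\mathbb Z/Np^r$ (the component on which $(\mathbb Z/Np\mathbb Z)^\times$ acts via $\theta$). $X=\varprojlim_r\mathrm{Cl}(\mathbb Q(\zeta_{Np^r}))[p^\infty]$ as a module over $\mathbb Z_p[[\mathbb Z_{p,N}^\times]]\cong\mathbb Z_p[[\mathrm{Gal}(\mathbb Q(\zeta_{Np^\infty})/\mathbb Q)]]$; $X_\chi(1)$ is its $\chi$-eigenspace with $\gamma$ acting as $\kappa(\gamma)\gamma$ ($\kappa$ the cyclotomic character), a torsion $\Lambda$-module, and $\xi=\xi_\chi\in\Lambda$ generates its characteristic ideal. Hecke setup: $\mathfrak H$ (resp. $\mathfrak h$) is the localization at the Eisenstein maximal ideal of Hida's ordinary Hecke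 algebra acting on $\varprojlim_rH^1(Y_1(Np^r),\mathbb Z_p)^{\mathrm{ord}}_\theta$ (resp. $\varprojlim_rH^1(X_1(Np^r),\mathbb Z_p)^{\mathrm{ord}}_\theta$), where the subscript $\theta$ is the eigenspace for the diamond operators; $\mathcal I\subset\mathfrak H$ is the Eisenstein ideal and $I\subset\mathfrak h$ its image. Known facts used as standing input: $\mathfrak H,\mathfrak h$ are finite flat $\Lambda$-algebras; $\mathfrak H/\mathcal I\cong\Lambda$; $\mathfrak h/I\cong\Lambda/\xi$; the natural map $\mathcal I\to I$ is an isomorphism of $\mathfrak H$-modules; $I$ is a faithful $\mathfrak h$-module. $\mathrm{Fitt}$ denotes the (zeroth) Fitting ideal. *)

theory Defs
  imports "Jordan_Normal_Form.Determinant"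
begin

definition is_ring_hom :: "('r::comm_ring_1 \<Rightarrow> 's::comm_ring_1) \<Rightarrow> bool" where
  "is_ring_hom f \<longleftrightarrow> f 1 = 1 \<and> (\<forall>x y. f (x + y) = f x + f y) \<and> (\<forall>x y. f (x * y) = f x * f y)"

definition gen_ideal :: "'r::comm_ring_1 set \<Rightarrow> 'r set" where
  "gen_ideal D = {x. \<exists>(k::nat) (c::nat \<Rightarrow> 'r) d. (\<forall>i<k. d i \<in> D) \<and> x = (\<Sum>i<k. c i * d i)}"

definition ideal_sq :: "'r::comm_ring_1 set \<Rightarrow> 'r set" where
  "ideal_sq J = gen_ideal {x * y | x y. x \<in> J \<and> y \<in> J}"

text \<open>Modules are given concretely as a quotient M/N of subgroups N \<subseteq> M of an abelian
  group 'm, with scalar action act of the ring 'r.  Elements of M/N are represented by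
  elements of M, and equality in M/N means difference in N.\<close>
definition lin_comb :: "('r \<Rightarrow> 'm::ab_group_add \<Rightarrow> 'm) \<Rightarrow> nat \<Rightarrow> (nat \<Rightarrow> 'r) \<Rightarrow> (nat \<Rightarrow> 'm) \<Rightarrow> 'm" where
  "lin_comb act n c g = (\<Sum>i<n. act (c i) (g i))"

definition generates :: "('r \<Rightarrow> 'm::ab_group_add \<Rightarrow> 'm) \<Rightarrow> 'm set \<Rightarrow> 'm set \<Rightarrow> nat \<Rightarrow> (nat \<Rightarrow> 'm) \<Rightarrow> bool" where
  "generates act M N n g \<longleftrightarrow> (\<forall>i<n. g i \<in> M) \<and> (\<forall>x\<in>M. \<exists>c. x - lin_comb act n c g \<in> N)"

definition fin_gen :: "('r \<Rightarrow> 'm::ab_group_add \<Rightarrow> 'm) \<Rightarrow> 'm set \<Rightarrow> 'm set \<Rightarrow> bool" where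
  "fin_gen act M N \<longleftrightarrow> (\<exists>n g. generates act M N n g)"

text \<open>Relation vectors of the generators g_0..g_{n-1} (only the first n coordinates matter).\<close>
definition relations :: "('r \<Rightarrow> 'm::ab_group_add \<Rightarrow> 'm) \<Rightarrow> 'm set \<Rightarrow> nat \<Rightarrow> (nat \<Rightarrow> 'm) \<Rightarrow> (nat \<Rightarrow> 'r) set" where
  "relations act N n g = {c. lin_comb act n c g \<in> N}"

text \<open>Zeroth Fitting ideal w.r.t. a chosen generating family: the ideal generated by the
  n x n minors of the relation matrix, i.e. determinants of n x n matrices whose rows are
  relation vectors.\<close>
definition fitting_wrt :: "('r::comm_ring_1 \<Rightarrow> 'm::ab_group_add \<Rightarrow> 'm) \<Rightarrow> 'm set \<Rightarrow> nat \<Rightarrow> (nat \<Rightarrow> 'm) \<Rightarrow> 'r set" where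
  "fitting_wrt act N n g = gen_ideal
     {det (mat n n (\<lambda>(i, j). rows i j)) | rows. \<forall>i<n. rows i \<in> relations act N n g}"

text \<open>Zeroth Fitting ideal of the finitely generated module M/N (independent of the choice
  of generators; here a generating family is chosen).\<close>
definition fitting_ideal :: "('r::comm_ring_1 \<Rightarrow> 'm::ab_group_add \<Rightarrow> 'm) \<Rightarrow> 'm set \<Rightarrow> 'm set \<Rightarrow> 'r set" where
  "fitting_ideal act M N =
     (let ng = (SOME ng. generates act M N (fst ng) (snd ng)) in fitting_wrt act N (fst ng) (snd ng))"

end

theory Submission
  imports Defs
begin

text \<open>Fix generators g of the augmentation ideal Ical = ker aug. Their images generate I/I^2
  over \<Lambda>, and I^2 consists of the \<phi>(\<Sum> e i * g i) with all e i in Ical. Since \<phi> is injective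
  on Ical, a relation r of the \<phi>(g i) modulo I^2 lifts to a relation of the g i whose
  augmentation is r, and conversely the augmentation of a relation of the g i is a relation
  modulo I^2; as Fitting ideals do not depend on the generators, this gives the equality. For the
  inclusion in (\<xi>): a maximal minor D of a relation matrix of the g i annihilates every g i by
  the adjugate identity, so \<phi>(D) annihilates I and vanishes by faithfulness. Hence
  Lamh(aug D) = \<phi>(LamH(aug D) - D) lies in I, i.e. \<xi> divides aug D.\<close>

definition is_ideal :: "'r::comm_ring_1 set \<Rightarrow> bool" where
  "is_ideal P \<longleftrightarrow> 0 \<in> P \<and> (\<forall>x\<in>P. \<forall>y\<in>P. x + y \<in> P) \<and> (\<forall>a. \<forall>x\<in>P. a * x \<in> P)"

lemma is_idealI:
  assumes "0 \<in> P" "\<And>x y. x \<in> P \<Longrightarrow> y \<in> P \<Longrightarrow> x + y \<in> P" "\<And>a x. x \<in> P \<Longrightarrow> a * x \<in> P"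
  shows "is_ideal P"
  using assms unfolding is_ideal_def by blast

lemma ideal_zero: "is_ideal P \<Longrightarrow> 0 \<in> P"
  unfolding is_ideal_def by blast

lemma ideal_add: "is_ideal P \<Longrightarrow> x \<in> P \<Longrightarrow> y \<in> P \<Longrightarrow> x + y \<in> P"
  unfolding is_ideal_def by blast

lemma ideal_mult: "is_ideal P \<Longrightarrow> x \<in> P \<Longrightarrow> a * x \<in> P"
  unfolding is_ideal_def by blast

lemma ideal_diff_mult: "is_ideal P \<Longrightarrow> x \<in> P \<Longrightarrow> y \<in> P \<Longrightarrow> x - a * y \<in> P"
  using ideal_add[of P x "- a * y"] ideal_mult[of P y "- a"]
  by (metis diff_conv_add_uminus mult_minus_left)

lemma ideal_sum: "is_ideal P \<Longrightarrow> (\<And>i. i \<in> S \<Longrightarrow> f i \<in> P) \<Longrightarrow> sum f S \<in> P"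
proof (induction S rule: infinite_finite_induct)
  case (insert i S)
  then show ?case by (simp add: ideal_add)
qed (simp_all add: ideal_zero)

lemma is_ideal_multiples: "is_ideal {a * l | l. True}"
proof (rule is_idealI)
  show "0 \<in> {a * l | l. True}"
    by (intro CollectI exI[of _ 0]) simp
  show "x + y \<in> {a * l | l. True}" if "x \<in> {a * l | l. True}" "y \<in> {a * l | l. True}" for x y
  proof -
    from that obtain l l' where "x = a * l" "y = a * l'"
      by blast
    then show ?thesis
      by (intro CollectI exI[of _ "l + l'"]) (simp add: distrib_left)
  qed
  show "b * x \<in> {a * l | l. True}" if "x \<in> {a * l | l. True}" for b x
  proof -
    from that obtain l where "x = a * l"
      by blast
    then show ?thesis
      by (intro CollectI exI[of _ "b * l"]) (simp add: mult.left_commute)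
  qed
qed

lemma is_ideal_zero: "is_ideal {0}"
  by (rule is_idealI) simp_all

lemma gen_ideal_base: "d \<in> D \<Longrightarrow> d \<in> gen_ideal D"
  unfolding gen_ideal_def
  by (intro CollectI exI[of _ 1] exI[of _ "\<lambda>_. 1"] exI[of _ "\<lambda>_. d"]) auto

lemma gen_ideal_is_ideal: "is_ideal (gen_ideal D)"
proof (rule is_idealI)
  show "0 \<in> gen_ideal D"
    unfolding gen_ideal_def by (intro CollectI exI[of _ "0::nat"]) simp
next
  fix a x assume "x \<in> gen_ideal D"
  then obtain k :: nat and c d where "\<forall>i<k. d i \<in> D" "x = (\<Sum>i<k. c i * d i)"
    unfolding gen_ideal_def mem_Collect_eq by blast
  then show "a * x \<in> gen_ideal D"
    unfolding gen_ideal_def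
    by (intro CollectI exI[of _ k] exI[of _ "\<lambda>i. a * c i"] exI[of _ d])
      (auto simp: sum_distrib_left mult.assoc)
next
  fix x y assume "x \<in> gen_ideal D" "y \<in> gen_ideal D"
  then obtain k k' :: nat and c d c' d' where
    x: "\<forall>i<k. d i \<in> D" "x = (\<Sum>i<k. c i * d i)" and
    y: "\<forall>i<k'. d' i \<in> D" "y = (\<Sum>i<k'. c' i * d' i)"
    unfolding gen_ideal_def mem_Collect_eq by blast
  define C where "C = (\<lambda>i. if i < k then c i else c' (i - k))"
  define E where "E = (\<lambda>i. if i < k then d i else d' (i - k))"
  have split: "(\<Sum>i<k + j. C i * E i) = (\<Sum>i<k. C i * E i) + (\<Sum>i<j. C (k + i) * E (k + i))" for j
    by (induction j) (simp_all add: add.assoc)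
  have "x + y = (\<Sum>i<k + k'. C i * E i)"
    unfolding split by (simp add: x y C_def E_def)
  moreover have "\<forall>i<k + k'. E i \<in> D"
    using x y unfolding E_def by auto
  ultimately show "x + y \<in> gen_ideal D"
    unfolding gen_ideal_def mem_Collect_eq by blast
qed

lemma gen_ideal_minimal:
  assumes "is_ideal P" "D \<subseteq> P"
  shows "gen_ideal D \<subseteq> P"
proof
  fix x assume "x \<in> gen_ideal D"
  then obtain k :: nat and c d where "\<forall>i<k. d i \<in> D" "x = (\<Sum>i<k. c i * d i)"
    unfolding gen_ideal_def mem_Collect_eq by blast
  then show "x \<in> P"
    using assms by (auto intro!: ideal_sum ideal_mult)
qed

lemma gen_ideal_subset: "(\<And>d. d \<in> D \<Longrightarrow> d \<in> gen_ideal E) \<Longrightarrow> gen_ideal D \<subseteq> gen_ideal E"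
  by (rule gen_ideal_minimal[OF gen_ideal_is_ideal]) blast

lemma is_ideal_ideal_sq: "is_ideal (ideal_sq J)"
  unfolding ideal_sq_def by (rule gen_ideal_is_ideal)

lemma comm_ring_hom_if_is_ring_hom: "is_ring_hom f \<Longrightarrow> comm_ring_hom f"
  unfolding is_ring_hom_def
  by unfold_locales (auto, metis add.right_neutral add_left_cancel)

lemma comm_ring_hom_id: "comm_ring_hom id"
  by unfold_locales simp_all

context comm_ring_hom
begin

lemma is_ideal_vimage: "is_ideal P \<Longrightarrow> is_ideal (hom -` P)"
  by (rule is_idealI) (auto simp: hom_distribs ideal_zero ideal_add ideal_mult)

lemma is_ideal_image:
  assumes "surj hom" "is_ideal P"
  shows "is_ideal (hom ` P)"
proof (rule is_idealI)
  show "0 \<in> hom ` P"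
    using ideal_zero[OF assms(2)] by (metis hom_zero image_eqI)
  show "x + y \<in> hom ` P" if "x \<in> hom ` P" "y \<in> hom ` P" for x y
    using that ideal_add[OF assms(2)] by (auto simp flip: hom_add)
  show "a * x \<in> hom ` P" if "x \<in> hom ` P" for a x
  proof -
    obtain b where "a = hom b"
      using assms(1) by (metis surj_def)
    then show ?thesis
      using that ideal_mult[OF assms(2)] by (auto simp flip: hom_mult)
  qed
qed

lemma image_gen_ideal:
  assumes "surj hom"
  shows "hom ` gen_ideal D = gen_ideal (hom ` D)"
proof
  have "gen_ideal D \<subseteq> hom -` gen_ideal (hom ` D)"
    by (rule gen_ideal_minimal[OF is_ideal_vimage[OF gen_ideal_is_ideal]])
      (auto intro: gen_ideal_base)
  then show "hom ` gen_ideal D \<subseteq> gen_ideal (hom ` D)"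
    by blast
  show "gen_ideal (hom ` D) \<subseteq> hom ` gen_ideal D"
    by (rule gen_ideal_minimal[OF is_ideal_image[OF assms gen_ideal_is_ideal]])
      (auto intro: gen_ideal_base)
qed

lemma hom_det_mat: "hom (det (mat n n (\<lambda>(i, j). S i j))) = det (mat n n (\<lambda>(i, j). hom (S i j)))"
proof -
  have "map_mat hom (mat n n (\<lambda>(i, j). S i j)) = mat n n (\<lambda>(i, j). hom (S i j))"
    by (rule eq_matI) auto
  then show ?thesis
    using hom_det[of "mat n n (\<lambda>(i, j). S i j)"] by simp
qed

end

lemma det_permute_cols:
  assumes p: "p permutes {0..<n}"
  shows "det (mat n n (\<lambda>(i, j). A i (p j))) = signof p * det (mat n n (\<lambda>(i, j). A i j))"
proof -
  let ?T = "mat n n (\<lambda>(i, j). A j i)"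
  let ?P = "mat n n (\<lambda>(i, j). ?T $$ (p i, j))"
  have T: "?T \<in> carrier_mat n n" and P: "?P \<in> carrier_mat n n"
    by auto
  have "mat n n (\<lambda>(i, j). A i (p j)) = transpose_mat ?P"
    using permutes_in_image[OF p] by (intro eq_matI) auto
  then have "det (mat n n (\<lambda>(i, j). A i (p j))) = signof p * det ?T"
    using det_transpose[OF P] det_permute_rows[OF T p] by simp
  also have "transpose_mat ?T = mat n n (\<lambda>(i, j). A i j)"
    by (intro eq_matI) auto
  then have "det ?T = det (mat n n (\<lambda>(i, j). A i j))"
    using det_transpose[OF T] by simp
  finally show ?thesis .
qed

lemma det_border_last_column:
  "det (mat (Suc n) (Suc n) (\<lambda>(i, j). if i < n then (if j < n then R i j else 0)
     else (if j < n then v j else 1))) = det (mat n n (\<lambda>(i, j). R i j))"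
  (is "det ?A = _")
proof -
  have "det ?A = (\<Sum>i<Suc n. ?A $$ (i, n) * cofactor ?A i n)"
    by (rule laplace_expansion_column) auto
  also have "\<dots> = cofactor ?A n n"
    by simp
  also have "mat_delete ?A n n = mat n n (\<lambda>(i, j). R i j)"
    by (rule eq_matI) (auto simp: mat_delete_def)
  then have "cofactor ?A n n = det (mat n n (\<lambda>(i, j). R i j))"
    by (simp add: cofactor_def)
  finally show ?thesis .
qed

lemma det_add_last_col_multiples:
  assumes A: "A \<in> carrier_mat (Suc n) (Suc n)"
  shows "det (mat (Suc n) (Suc n) (\<lambda>(i, j). if j < n then A $$ (i, j) + A $$ (i, n) * c j
     else A $$ (i, j))) = det A"
proof -
  let ?M = "\<lambda>k. mat (Suc n) (Suc n) (\<lambda>(i, j). if j < k then A $$ (i, j) + A $$ (i, n) * c j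
     else A $$ (i, j))"
  have "k \<le> n \<Longrightarrow> det (?M k) = det A" for k
  proof (induction k)
    case 0
    have "?M 0 = A"
      using A by (intro eq_matI) auto
    then show ?case by simp
  next
    case (Suc k)
    have "?M (Suc k) = addcol (c k) k n (?M k)"
      using Suc.prems by (intro eq_matI) (auto simp: mult.commute)
    then show ?case
      using Suc det_addcol[where l = n and n = "Suc n" and k = k and A = "?M k"] by simp
  qed
  then show ?thesis by simp
qed

lemma det_smult_eq_zero_if_mult_vec_eq_zero:
  assumes A: "A \<in> carrier_mat n n" and v: "v \<in> carrier_vec n" and Av: "A *\<^sub>v v = 0\<^sub>v n"
  shows "det A \<cdot>\<^sub>v v = 0\<^sub>v n"
proof -
  have "det A \<cdot>\<^sub>v v = (adj_mat A * A) *\<^sub>v v"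
    using adj_mat[OF A] v by auto
  also have "\<dots> = adj_mat A *\<^sub>v (A *\<^sub>v v)"
    using adj_mat[OF A] A v by (metis assoc_mult_mat_vec)
  also have "\<dots> = 0\<^sub>v n"
    unfolding Av using adj_mat[OF A] by (intro eq_vecI) auto
  finally show ?thesis .
qed

lemma lin_comb_upd_Suc: "lin_comb act (Suc n) r (g(n := y)) = lin_comb act n r g + act (r n) y"
proof -
  have "(\<Sum>i<n. act (r i) ((g(n := y)) i)) = (\<Sum>i<n. act (r i) (g i))"
    by (rule sum.cong) auto
  then show ?thesis
    unfolding lin_comb_def by simp
qed

lemma relations_cong: "(\<And>i. i < n \<Longrightarrow> g i = g' i) \<Longrightarrow> relations act N n g = relations act N n g'"
proof -
  assume "\<And>i. i < n \<Longrightarrow> g i = g' i"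
  then have "lin_comb act n r g = lin_comb act n r g'" for r
    unfolding lin_comb_def by (intro sum.cong) auto
  then show ?thesis
    unfolding relations_def by simp
qed

lemma fitting_wrt_cong:
  "(\<And>i. i < n \<Longrightarrow> g i = g' i) \<Longrightarrow> fitting_wrt act N n g = fitting_wrt act N n g'"
  unfolding fitting_wrt_def by (simp add: relations_cong[of n g g' act N])

lemma fitting_wrt_permute_subset:
  fixes act :: "'r::comm_ring_1 \<Rightarrow> 'm::ab_group_add \<Rightarrow> 'm"
  assumes p: "p permutes {0..<n}"
  shows "fitting_wrt act N n (g \<circ> p) \<subseteq> fitting_wrt act N n g"
  unfolding fitting_wrt_def
proof (rule gen_ideal_subset)
  fix d
  assume "d \<in> {det (mat n n (\<lambda>(i, j). rows i j)) | rows. \<forall>i<n. rows i \<in> relations act N n (g \<circ> p)}"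
  then obtain R where d: "d = det (mat n n (\<lambda>(i, j). R i j))"
    and R: "\<forall>i<n. R i \<in> relations act N n (g \<circ> p)"
    by blast
  let ?q = "inv_into UNIV p"
  have "lin_comb act n (R i \<circ> ?q) g = lin_comb act n (R i) (g \<circ> p)" for i
    unfolding lin_comb_def lessThan_atLeast0
    using sum.permute[OF p, of "\<lambda>j. act (R i (?q j)) (g j)"]
    by (simp add: permutes_inverses[OF p])
  then have "\<forall>i<n. R i \<circ> ?q \<in> relations act N n g"
    using R unfolding relations_def by simp
  then have "det (mat n n (\<lambda>(i, j). (R i \<circ> ?q) j))
      \<in> gen_ideal {det (mat n n (\<lambda>(i, j). rows i j)) | rows. \<forall>i<n. rows i \<in> relations act N n g}"
    by (intro gen_ideal_base) blast
  moreover have "d = signof p * det (mat n n (\<lambda>(i, j). (R i \<circ> ?q) j))"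
    using det_permute_cols[OF p, of "\<lambda>i j. (R i \<circ> ?q) j"]
    by (simp add: d permutes_inverses[OF p])
  ultimately show "d \<in> gen_ideal
      {det (mat n n (\<lambda>(i, j). rows i j)) | rows. \<forall>i<n. rows i \<in> relations act N n g}"
    by (simp add: ideal_mult gen_ideal_is_ideal)
qed

lemma fitting_wrt_permute:
  fixes act :: "'r::comm_ring_1 \<Rightarrow> 'm::ab_group_add \<Rightarrow> 'm"
  assumes p: "p permutes {0..<n}"
  shows "fitting_wrt act N n (g \<circ> p) = fitting_wrt act N n g"
proof
  show "fitting_wrt act N n (g \<circ> p) \<subseteq> fitting_wrt act N n g"
    by (rule fitting_wrt_permute_subset[OF p])
  have "fitting_wrt act N n g = fitting_wrt act N n ((g \<circ> p) \<circ> inv_into UNIV p)"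
    by (rule fitting_wrt_cong) (simp add: permutes_inverses[OF p])
  also have "\<dots> \<subseteq> fitting_wrt act N n (g \<circ> p)"
    by (rule fitting_wrt_permute_subset[OF permutes_inv[OF p]])
  finally show "fitting_wrt act N n g \<subseteq> fitting_wrt act N n (g \<circ> p)" .
qed

lemma det_mem_fitting_wrt:
  fixes act :: "'r::comm_ring_1 \<Rightarrow> 'm::ab_group_add \<Rightarrow> 'm"
  assumes B: "B \<in> carrier_mat (Suc n) (Suc n)"
    and rows: "\<And>k. k < Suc n \<Longrightarrow> (\<lambda>j. B $$ (k, j)) \<in> relations act N n g"
  shows "det B \<in> fitting_wrt act N n g"
proof -
  let ?D = "{det (mat n n (\<lambda>(i, j). rows i j)) | rows. \<forall>i<n. rows i \<in> relations act N n g}"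
  have "det B = (\<Sum>i<Suc n. B $$ (i, n) * cofactor B i n)"
    by (rule laplace_expansion_column[OF B]) simp
  also have "\<dots> \<in> gen_ideal ?D"
  proof (intro ideal_sum ideal_mult gen_ideal_is_ideal)
    fix i assume "i \<in> {..<Suc n}"
    let ?S = "\<lambda>k j. B $$ (if k < i then k else Suc k, j)"
    have "mat_delete B i n = mat n n (\<lambda>(k, j). ?S k j)"
      using B by (intro eq_matI) (auto simp: mat_delete_def)
    moreover have "\<forall>k<n. ?S k \<in> relations act N n g"
      using rows by simp
    ultimately have "det (mat_delete B i n) \<in> gen_ideal ?D"
      by (intro gen_ideal_base) auto
    then show "cofactor B i n \<in> gen_ideal ?D"
      unfolding cofactor_def by (intro ideal_mult gen_ideal_is_ideal)
  qed
  finally show ?thesis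
    unfolding fitting_wrt_def .
qed

context
  fixes f :: "'r::comm_ring_1 \<Rightarrow> 'b::comm_ring_1" and N :: "'b set"
  assumes f: "comm_ring_hom f" and N: "is_ideal N"
begin

interpretation f: comm_ring_hom f
  by (rule f)

abbreviation hom_act :: "'r \<Rightarrow> 'b \<Rightarrow> 'b" where
  "hom_act \<equiv> \<lambda>l x. f l * x"

lemma lin_comb_hom_add_mult:
  "lin_comb hom_act n (\<lambda>j. r j + a * c j) g = lin_comb hom_act n r g + f a * lin_comb hom_act n c g"
  unfolding lin_comb_def
  by (simp add: hom_distribs sum.distrib sum_distrib_left algebra_simps)

lemma lin_comb_hom_zero_extend:
  assumes "\<And>i. i < n \<Longrightarrow> G i = g i"
  shows "lin_comb hom_act (n + m) (\<lambda>i. if i < n then c i else 0) G = lin_comb hom_act n c g"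
proof -
  have "lin_comb hom_act (n + m) (\<lambda>i. if i < n then c i else 0) G
      = (\<Sum>i<n. f (if i < n then c i else 0) * G i)"
    unfolding lin_comb_def by (rule sum.mono_neutral_right) auto
  also have "\<dots> = lin_comb hom_act n c g"
    unfolding lin_comb_def using assms by (intro sum.cong) auto
  finally show ?thesis .
qed

lemma fitting_wrt_le_Suc:
  assumes y: "y - lin_comb hom_act n c g \<in> N"
  shows "fitting_wrt hom_act N n g \<subseteq> fitting_wrt hom_act N (Suc n) (g(n := y))"
  unfolding fitting_wrt_def
proof (rule gen_ideal_subset)
  fix d
  assume "d \<in> {det (mat n n (\<lambda>(i, j). rows i j)) | rows. \<forall>i<n. rows i \<in> relations hom_act N n g}"
  then obtain R where d: "d = det (mat n n (\<lambda>(i, j). R i j))"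
    and R: "\<forall>i<n. R i \<in> relations hom_act N n g"
    by blast
  define R' where
    "R' = (\<lambda>i j. if i < n then (if j < n then R i j else 0) else (if j < n then - c j else 1))"
  have "lin_comb hom_act n (\<lambda>j. if j < n then r j else z) g = lin_comb hom_act n r g" for r z
    unfolding lin_comb_def by (intro sum.cong) auto
  moreover have "lin_comb hom_act n (\<lambda>j. - c j) g = - lin_comb hom_act n c g"
    unfolding lin_comb_def by (simp add: hom_distribs sum_negf)
  ultimately have "lin_comb hom_act (Suc n) (R' i) (g(n := y))
      = (if i < n then lin_comb hom_act n (R i) g else y - lin_comb hom_act n c g)" for i
    unfolding lin_comb_upd_Suc by (simp add: R'_def)
  then have "\<forall>i<Suc n. R' i \<in> relations hom_act N (Suc n) (g(n := y))"
    using R y unfolding relations_def by (simp add: less_Suc_eq)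
  moreover have "d = det (mat (Suc n) (Suc n) (\<lambda>(i, j). R' i j))"
    unfolding d R'_def by (rule det_border_last_column[symmetric])
  ultimately show "d \<in> gen_ideal {det (mat (Suc n) (Suc n) (\<lambda>(i, j). rows i j)) | rows.
      \<forall>i<Suc n. rows i \<in> relations hom_act N (Suc n) (g(n := y))}"
    by (intro gen_ideal_base) blast
qed

text \<open>Adding multiples of the last column, which does not change the determinant, turns the
  first n entries of every relation row of g(n := y) into a relation of g.\<close>

lemma fitting_wrt_Suc_le:
  assumes y: "y - lin_comb hom_act n c g \<in> N"
  shows "fitting_wrt hom_act N (Suc n) (g(n := y)) \<subseteq> fitting_wrt hom_act N n g"
  unfolding fitting_wrt_def
proof (rule gen_ideal_subset)
  fix d
  assume "d \<in> {det (mat (Suc n) (Suc n) (\<lambda>(i, j). rows i j)) | rows.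
      \<forall>i<Suc n. rows i \<in> relations hom_act N (Suc n) (g(n := y))}"
  then obtain R where d: "d = det (mat (Suc n) (Suc n) (\<lambda>(i, j). R i j))"
    and R: "\<forall>i<Suc n. R i \<in> relations hom_act N (Suc n) (g(n := y))"
    by blast
  let ?A = "mat (Suc n) (Suc n) (\<lambda>(i, j). R i j)"
  let ?B = "mat (Suc n) (Suc n) (\<lambda>(i, j). if j < n then ?A $$ (i, j) + ?A $$ (i, n) * c j
     else ?A $$ (i, j))"
  have "(\<lambda>j. ?B $$ (k, j)) \<in> relations hom_act N n g" if k: "k < Suc n" for k
  proof -
    have "lin_comb hom_act (Suc n) (R k) (g(n := y)) \<in> N"
      using R k unfolding relations_def by blast
    then have "lin_comb hom_act n (R k) g + f (R k n) * y
        - f (R k n) * (y - lin_comb hom_act n c g) \<in> N"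
      unfolding lin_comb_upd_Suc using ideal_diff_mult[OF N _ y] by blast
    moreover have "lin_comb hom_act n (\<lambda>j. ?B $$ (k, j)) g
        = lin_comb hom_act n (\<lambda>j. R k j + R k n * c j) g"
      unfolding lin_comb_def using k by (intro sum.cong) auto
    moreover have "\<dots> = lin_comb hom_act n (R k) g + f (R k n) * y
        - f (R k n) * (y - lin_comb hom_act n c g)"
    proof -
      have ring_identity: "X + a * L = X + a * y - a * (y - L)" for X a L :: 'b
        by (simp add: algebra_simps)
      show ?thesis
        unfolding lin_comb_hom_add_mult by (rule ring_identity)
    qed
    ultimately show ?thesis
      unfolding relations_def by simp
  qed
  then have "det ?B \<in> fitting_wrt hom_act N n g"
    by (intro det_mem_fitting_wrt) auto
  then show "d \<in> gen_ideal {det (mat n n (\<lambda>(i, j). rows i j)) | rows.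
      \<forall>i<n. rows i \<in> relations hom_act N n g}"
    unfolding d fitting_wrt_def by (simp add: det_add_last_col_multiples)
qed

lemma fitting_wrt_add_redundant:
  "y - lin_comb hom_act n c g \<in> N
    \<Longrightarrow> fitting_wrt hom_act N (Suc n) (g(n := y)) = fitting_wrt hom_act N n g"
  using fitting_wrt_le_Suc fitting_wrt_Suc_le by blast

lemma fitting_wrt_extend:
  assumes "\<And>j. j < m \<Longrightarrow> \<exists>c. h j - lin_comb hom_act n c g \<in> N"
  shows "fitting_wrt hom_act N (n + m) (\<lambda>i. if i < n then g i else h (i - n))
    = fitting_wrt hom_act N n g"
  using assms
proof (induction m)
  case 0
  show ?case
    using fitting_wrt_cong[of n "\<lambda>i. if i < n then g i else h (i - n)" g] by simp
next
  case (Suc m)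
  let ?G = "\<lambda>i. if i < n then g i else h (i - n)"
  obtain c where "h m - lin_comb hom_act n c g \<in> N"
    using Suc.prems by blast
  moreover have
    "lin_comb hom_act (n + m) (\<lambda>i. if i < n then c i else 0) ?G = lin_comb hom_act n c g"
    by (rule lin_comb_hom_zero_extend) simp
  ultimately have y: "h m - lin_comb hom_act (n + m) (\<lambda>i. if i < n then c i else 0) ?G \<in> N"
    by simp
  have "fitting_wrt hom_act N (n + Suc m) ?G
      = fitting_wrt hom_act N (Suc (n + m)) (?G(n + m := h m))"
    unfolding add_Suc_right by (intro fitting_wrt_cong) auto
  also have "\<dots> = fitting_wrt hom_act N (n + m) ?G"
    by (rule fitting_wrt_add_redundant[OF y])
  also have "\<dots> = fitting_wrt hom_act N n g"
    using Suc by simp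
  finally show ?case .
qed

text \<open>Both families are redundant in their concatenation, and the two concatenations differ
  by a permutation.\<close>

lemma fitting_wrt_generators_indep:
  assumes g: "generates hom_act M N n g" and h: "generates hom_act M N m h"
  shows "fitting_wrt hom_act N n g = fitting_wrt hom_act N m h"
proof -
  have gh: "fitting_wrt hom_act N (n + m) (\<lambda>i. if i < n then g i else h (i - n))
      = fitting_wrt hom_act N n g"
    using g h unfolding generates_def by (intro fitting_wrt_extend) blast
  have hg: "fitting_wrt hom_act N (m + n) (\<lambda>i. if i < m then h i else g (i - m))
      = fitting_wrt hom_act N m h"
    using g h unfolding generates_def by (intro fitting_wrt_extend) blast
  define \<sigma> where "\<sigma> = (\<lambda>i::nat. if i < m then i + n else if i < n + m then i - m else i)"
  define \<tau> where "\<tau> = (\<lambda>i::nat. if i < n then i + m else if i < n + m then i - n else i)"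
  have \<sigma>: "\<sigma> permutes {0..<n + m}"
  proof (rule bij_imp_permutes)
    show "bij_betw \<sigma> {0..<n + m} {0..<n + m}"
      by (rule bij_betw_byWitness[where f' = \<tau>]) (auto simp: \<sigma>_def \<tau>_def)
  qed (auto simp: \<sigma>_def)
  have "fitting_wrt hom_act N (m + n) (\<lambda>i. if i < m then h i else g (i - m))
      = fitting_wrt hom_act N (n + m) ((\<lambda>i. if i < n then g i else h (i - n)) \<circ> \<sigma>)"
    by (simp add: add.commute) (intro fitting_wrt_cong, auto simp: \<sigma>_def)
  also have "\<dots> = fitting_wrt hom_act N (n + m) (\<lambda>i. if i < n then g i else h (i - n))"
    by (rule fitting_wrt_permute[OF \<sigma>])
  finally show ?thesis
    using gh hg by simp
qed

lemma fitting_ideal_eq_fitting_wrt: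
  assumes "generates hom_act M N n g"
  shows "fitting_ideal hom_act M N = fitting_wrt hom_act N n g"
proof -
  let ?ng = "SOME ng. generates hom_act M N (fst ng) (snd ng)"
  have "generates hom_act M N (fst ?ng) (snd ?ng)"
    by (rule someI[where x = "(n, g)"]) (simp add: assms)
  then show ?thesis
    unfolding fitting_ideal_def Let_def using fitting_wrt_generators_indep assms by blast
qed

end

locale eisenstein_augmentation =
  \<phi>: comm_ring_hom \<phi> + aug: comm_ring_hom aug
  for \<phi> :: "'a::comm_ring_1 \<Rightarrow> 'b::comm_ring_1" and aug :: "'a \<Rightarrow> 'l::comm_ring_1" +
  fixes LamH :: "'l \<Rightarrow> 'a" and Lamh :: "'l \<Rightarrow> 'b"
    and Ical :: "'a set" and I :: "'b set" and \<xi> :: 'l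
    and n :: nat and g :: "nat \<Rightarrow> 'a"
  assumes surj_\<phi>: "surj \<phi>"
    and compat: "\<And>l. \<phi> (LamH l) = Lamh l"
    and aug_section: "\<And>l. aug (LamH l) = l"
    and Ical_def: "Ical = {x. aug x = 0}"
    and I_def: "I = \<phi> ` Ical"
    and inj_on_\<phi>: "inj_on \<phi> Ical"
    and quot_h: "\<And>l. Lamh l \<in> I \<longleftrightarrow> \<xi> dvd l"
    and faithful: "\<And>b. (\<forall>x\<in>I. b * x = 0) \<Longrightarrow> b = 0"
    and generators: "generates (*) Ical {0} n g"
begin

lemma mem_Ical_iff: "x \<in> Ical \<longleftrightarrow> aug x = 0"
  by (simp add: Ical_def)

lemma is_ideal_Ical: "is_ideal Ical"
  by (rule is_idealI) (simp_all add: mem_Ical_iff aug.hom_add aug.hom_mult)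

lemma section_diff_mem_Ical: "x - LamH (aug x) \<in> Ical" "LamH (aug x) - x \<in> Ical"
  by (simp_all add: mem_Ical_iff aug.hom_minus aug_section)

lemma surj_aug: "surj aug"
  by (metis aug_section surj_def)

lemma generator_mem_Ical: "i < n \<Longrightarrow> g i \<in> Ical"
  using generators unfolding generates_def by blast

lemma Ical_combination: "x \<in> Ical \<Longrightarrow> \<exists>c. x = (\<Sum>i<n. c i * g i)"
  using generators unfolding generates_def lin_comb_def by auto

lemma lin_comb_hom_act_Lamh: "lin_comb (hom_act Lamh) n r (\<phi> \<circ> g) = \<phi> (\<Sum>i<n. LamH (r i) * g i)"
  unfolding lin_comb_def by (simp add: \<phi>.hom_sum \<phi>.hom_mult compat)

lemma is_ideal_combinations: "is_ideal {\<phi> (\<Sum>i<n. e i * g i) | e. \<forall>i<n. e i \<in> Ical}"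
proof (rule is_idealI)
  show "0 \<in> {\<phi> (\<Sum>i<n. e i * g i) | e. \<forall>i<n. e i \<in> Ical}"
    by (intro CollectI exI[of _ "\<lambda>_. 0"]) (simp add: ideal_zero[OF is_ideal_Ical])
next
  fix x y
  assume "x \<in> {\<phi> (\<Sum>i<n. e i * g i) | e. \<forall>i<n. e i \<in> Ical}"
    and "y \<in> {\<phi> (\<Sum>i<n. e i * g i) | e. \<forall>i<n. e i \<in> Ical}"
  then obtain e e' where "\<forall>i<n. e i \<in> Ical" "x = \<phi> (\<Sum>i<n. e i * g i)"
    "\<forall>i<n. e' i \<in> Ical" "y = \<phi> (\<Sum>i<n. e' i * g i)"
    by blast
  then show "x + y \<in> {\<phi> (\<Sum>i<n. e i * g i) | e. \<forall>i<n. e i \<in> Ical}"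
    by (intro CollectI exI[of _ "\<lambda>i. e i + e' i"])
      (simp add: ideal_add[OF is_ideal_Ical] \<phi>.hom_add[symmetric] sum.distrib distrib_right)
next
  fix a x
  assume "x \<in> {\<phi> (\<Sum>i<n. e i * g i) | e. \<forall>i<n. e i \<in> Ical}"
  then obtain e where "\<forall>i<n. e i \<in> Ical" "x = \<phi> (\<Sum>i<n. e i * g i)"
    by blast
  moreover obtain A where "a = \<phi> A"
    using surj_\<phi> by (metis surj_def)
  ultimately show "a * x \<in> {\<phi> (\<Sum>i<n. e i * g i) | e. \<forall>i<n. e i \<in> Ical}"
    by (intro CollectI exI[of _ "\<lambda>i. A * e i"])
      (simp add: ideal_mult[OF is_ideal_Ical] \<phi>.hom_mult[symmetric] sum_distrib_left mult.assoc)
qed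

lemma ideal_sq_I_eq: "ideal_sq I = {\<phi> (\<Sum>i<n. e i * g i) | e. \<forall>i<n. e i \<in> Ical}"
proof
  show "ideal_sq I \<subseteq> {\<phi> (\<Sum>i<n. e i * g i) | e. \<forall>i<n. e i \<in> Ical}"
    unfolding ideal_sq_def I_def
  proof (rule gen_ideal_minimal[OF is_ideal_combinations], safe)
    fix A B assume "A \<in> Ical" "B \<in> Ical"
    obtain c where "B = (\<Sum>i<n. c i * g i)"
      using Ical_combination[OF \<open>B \<in> Ical\<close>] by blast
    then have "\<phi> A * \<phi> B = \<phi> (\<Sum>i<n. (c i * A) * g i)"
      by (simp add: \<phi>.hom_mult[symmetric] sum_distrib_left algebra_simps)
    moreover have "\<forall>i<n. c i * A \<in> Ical"
      using ideal_mult[OF is_ideal_Ical \<open>A \<in> Ical\<close>] by blast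
    ultimately show "\<exists>e. \<phi> A * \<phi> B = \<phi> (\<Sum>i<n. e i * g i) \<and> (\<forall>i<n. e i \<in> Ical)"
      by (intro exI[of _ "\<lambda>i. c i * A"]) simp
  qed
  show "{\<phi> (\<Sum>i<n. e i * g i) | e. \<forall>i<n. e i \<in> Ical} \<subseteq> ideal_sq I"
  proof safe
    fix e assume e: "\<forall>i<n. e i \<in> Ical"
    have "\<phi> (e i) * \<phi> (g i) \<in> ideal_sq I" if "i < n" for i
      unfolding ideal_sq_def I_def using e generator_mem_Ical that
      by (intro gen_ideal_base) blast
    then show "\<phi> (\<Sum>i<n. e i * g i) \<in> ideal_sq I"
      unfolding \<phi>.hom_sum \<phi>.hom_mult by (intro ideal_sum[OF is_ideal_ideal_sq]) auto
  qed
qed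

lemma generates_mod_sq: "generates (hom_act Lamh) I (ideal_sq I) n (\<phi> \<circ> g)"
  unfolding generates_def
proof (intro conjI allI impI ballI)
  show "(\<phi> \<circ> g) i \<in> I" if "i < n" for i
    using generator_mem_Ical[OF that] unfolding I_def by simp
next
  fix x assume "x \<in> I"
  then obtain X where X: "X \<in> Ical" "x = \<phi> X"
    unfolding I_def by blast
  then obtain c where c: "X = (\<Sum>i<n. c i * g i)"
    using Ical_combination by blast
  have "x - lin_comb (hom_act Lamh) n (aug \<circ> c) (\<phi> \<circ> g) = \<phi> (\<Sum>i<n. (c i - LamH (aug (c i))) * g i)"
    unfolding X(2) c lin_comb_hom_act_Lamh
    by (simp add: \<phi>.hom_minus[symmetric] sum_subtractf[symmetric] algebra_simps)
  also have "\<dots> \<in> ideal_sq I"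
    unfolding ideal_sq_I_eq using section_diff_mem_Ical(1)
    by (intro CollectI exI[of _ "\<lambda>i. c i - LamH (aug (c i))"]) simp
  finally show "\<exists>c. x - lin_comb (hom_act Lamh) n c (\<phi> \<circ> g) \<in> ideal_sq I"
    by blast
qed

lemma aug_relation:
  assumes s: "s \<in> relations (*) {0} n g"
  shows "aug \<circ> s \<in> relations (hom_act Lamh) (ideal_sq I) n (\<phi> \<circ> g)"
proof -
  have "(\<Sum>i<n. s i * g i) = 0"
    using s unfolding relations_def lin_comb_def by simp
  then have "lin_comb (hom_act Lamh) n (aug \<circ> s) (\<phi> \<circ> g) = \<phi> (\<Sum>i<n. (LamH (aug (s i)) - s i) * g i)"
    unfolding lin_comb_hom_act_Lamh by (simp add: algebra_simps sum_subtractf)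
  also have "\<dots> \<in> ideal_sq I"
    unfolding ideal_sq_I_eq using section_diff_mem_Ical(2)
    by (intro CollectI exI[of _ "\<lambda>i. LamH (aug (s i)) - s i"]) simp
  finally show ?thesis
    unfolding relations_def by simp
qed

lemma relation_lift:
  assumes r: "r \<in> relations (hom_act Lamh) (ideal_sq I) n (\<phi> \<circ> g)"
  shows "\<exists>s. s \<in> relations (*) {0} n g \<and> (\<forall>i<n. aug (s i) = r i)"
proof -
  obtain e where e: "\<forall>i<n. e i \<in> Ical" "lin_comb (hom_act Lamh) n r (\<phi> \<circ> g) = \<phi> (\<Sum>i<n. e i * g i)"
    using r unfolding relations_def ideal_sq_I_eq by blast
  define s where "s = (\<lambda>i. LamH (r i) - e i)"
  have "(\<Sum>i<n. s i * g i) \<in> Ical"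
    using generator_mem_Ical
    by (intro ideal_sum[OF is_ideal_Ical] ideal_mult[OF is_ideal_Ical]) simp
  moreover have "\<phi> (\<Sum>i<n. s i * g i) = \<phi> 0"
    using e(2) unfolding s_def lin_comb_hom_act_Lamh
    by (simp add: left_diff_distrib sum_subtractf \<phi>.hom_minus)
  ultimately have "(\<Sum>i<n. s i * g i) = 0"
    using inj_onD[OF inj_on_\<phi> _ _ ideal_zero[OF is_ideal_Ical]] by blast
  moreover have "\<forall>i<n. aug (s i) = r i"
    using e(1) unfolding s_def by (simp add: aug.hom_minus aug_section mem_Ical_iff)
  ultimately show ?thesis
    unfolding relations_def lin_comb_def by auto
qed

lemma minor_lift:
  assumes R: "\<forall>i<n. R i \<in> relations (hom_act Lamh) (ideal_sq I) n (\<phi> \<circ> g)"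
  shows "\<exists>S. (\<forall>i<n. S i \<in> relations (*) {0} n g)
    \<and> det (mat n n (\<lambda>(i, j). R i j)) = aug (det (mat n n (\<lambda>(i, j). S i j)))"
proof -
  obtain S where S: "\<forall>i<n. S i \<in> relations (*) {0} n g \<and> (\<forall>j<n. aug (S i j) = R i j)"
  proof -
    have "\<forall>i. \<exists>s. i < n \<longrightarrow> s \<in> relations (*) {0} n g \<and> (\<forall>j<n. aug (s j) = R i j)"
      using relation_lift R by blast
    then show ?thesis
      using that by metis
  qed
  then have "mat n n (\<lambda>(i, j). R i j) = mat n n (\<lambda>(i, j). aug (S i j))"
    by (intro eq_matI) auto
  then show ?thesis
    using S by (intro exI[of _ S]) (simp add: aug.hom_det_mat)
qed

lemma aug_fitting_wrt:
  "aug ` fitting_wrt (*) {0} n g = fitting_wrt (hom_act Lamh) (ideal_sq I) n (\<phi> \<circ> g)"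
proof -
  let ?DH = "{det (mat n n (\<lambda>(i, j). S i j)) | S. \<forall>i<n. S i \<in> relations (*) {0} n g}"
  let ?DL = "{det (mat n n (\<lambda>(i, j). R i j)) | R.
    \<forall>i<n. R i \<in> relations (hom_act Lamh) (ideal_sq I) n (\<phi> \<circ> g)}"
  have "aug ` ?DH \<subseteq> ?DL"
  proof
    fix d assume "d \<in> aug ` ?DH"
    then obtain S where S: "\<forall>i<n. S i \<in> relations (*) {0} n g"
      and d: "d = aug (det (mat n n (\<lambda>(i, j). S i j)))"
      by blast
    have "\<forall>i<n. aug \<circ> S i \<in> relations (hom_act Lamh) (ideal_sq I) n (\<phi> \<circ> g)"
      using S by (simp add: aug_relation)
    moreover have "d = det (mat n n (\<lambda>(i, j). (aug \<circ> S i) j))"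
      unfolding d aug.hom_det_mat by simp
    ultimately show "d \<in> ?DL"
      by blast
  qed
  moreover have "?DL \<subseteq> aug ` ?DH"
    using minor_lift by blast
  ultimately have "aug ` ?DH = ?DL"
    by (rule subset_antisym)
  then show ?thesis
    unfolding fitting_wrt_def aug.image_gen_ideal[OF surj_aug] by simp
qed

lemma \<phi>_det_relation_matrix:
  assumes S: "\<forall>i<n. S i \<in> relations (*) {0} n g"
  shows "\<phi> (det (mat n n (\<lambda>(i, j). S i j))) = 0"
proof -
  let ?B = "mat n n (\<lambda>(i, j). \<phi> (S i j))"
  let ?v = "vec n (\<lambda>j. \<phi> (g j))"
  have "?B *\<^sub>v ?v = 0\<^sub>v n"
  proof (rule eq_vecI)
    fix i assume "i < dim_vec (0\<^sub>v n :: 'b vec)"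
    then have i: "i < n" by simp
    have "(?B *\<^sub>v ?v) $ i = \<phi> (\<Sum>j<n. S i j * g j)"
      using i by (simp add: scalar_prod_def lessThan_atLeast0 \<phi>.hom_sum \<phi>.hom_mult)
    also have "(\<Sum>j<n. S i j * g j) = 0"
      using S i unfolding relations_def lin_comb_def by simp
    finally show "(?B *\<^sub>v ?v) $ i = 0\<^sub>v n $ i"
      using i by simp
  qed simp
  then have det_v: "det ?B \<cdot>\<^sub>v ?v = 0\<^sub>v n"
    by (intro det_smult_eq_zero_if_mult_vec_eq_zero) auto
  have kill: "det ?B * \<phi> (g j) = 0" if "j < n" for j
    using arg_cong[OF det_v, of "\<lambda>w. w $ j"] that by simp
  have "det ?B = 0"
  proof (rule faithful, intro ballI)
    fix x assume "x \<in> I"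
    then obtain X where "X \<in> Ical" "x = \<phi> X"
      unfolding I_def by blast
    then obtain c where "x = \<phi> (\<Sum>i<n. c i * g i)"
      using Ical_combination by blast
    then have "det ?B * x = (\<Sum>i<n. \<phi> (c i) * (det ?B * \<phi> (g i)))"
      by (simp add: \<phi>.hom_sum \<phi>.hom_mult sum_distrib_left algebra_simps)
    then show "det ?B * x = 0"
      by (simp add: kill)
  qed
  then show ?thesis
    by (simp add: \<phi>.hom_det_mat)
qed

lemma fitting_wrt_subset_multiples:
  "fitting_wrt (hom_act Lamh) (ideal_sq I) n (\<phi> \<circ> g) \<subseteq> {\<xi> * l | l. True}"
  unfolding fitting_wrt_def
proof (rule gen_ideal_minimal[OF is_ideal_multiples], rule subsetI)
  fix d
  assume "d \<in> {det (mat n n (\<lambda>(i, j). R i j)) | R.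
    \<forall>i<n. R i \<in> relations (hom_act Lamh) (ideal_sq I) n (\<phi> \<circ> g)}"
  then obtain S where S: "\<forall>i<n. S i \<in> relations (*) {0} n g"
    and d: "d = aug (det (mat n n (\<lambda>(i, j). S i j)))"
    using minor_lift by blast
  let ?D = "det (mat n n (\<lambda>(i, j). S i j))"
  have "Lamh (aug ?D) = \<phi> (LamH (aug ?D) - ?D)"
    using \<phi>_det_relation_matrix[OF S] by (simp add: \<phi>.hom_minus compat)
  then have "Lamh (aug ?D) \<in> I"
    unfolding I_def using section_diff_mem_Ical(2) by blast
  then show "d \<in> {\<xi> * l | l. True}"
    unfolding d quot_h by (auto elim: dvdE)
qed

end

theorem mainTheorem6:
  fixes LamH :: "'l::comm_ring_1 \<Rightarrow> 'a::comm_ring_1"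
    and Lamh :: "'l \<Rightarrow> 'b::comm_ring_1"
    and \<phi> :: "'a \<Rightarrow> 'b"
    and aug :: "'a \<Rightarrow> 'l"
    and Ical :: "'a set" and I :: "'b set" and \<xi> :: 'l
  assumes hom_LamH: "is_ring_hom LamH"
    and hom_Lamh: "is_ring_hom Lamh"
    and hom_\<phi>: "is_ring_hom \<phi>"
    and surj_\<phi>: "surj \<phi>"
    and compat: "\<And>l. \<phi> (LamH l) = Lamh l"
    and hom_aug: "is_ring_hom aug"
    and aug_section: "\<And>l. aug (LamH l) = l"
    and Ical_def: "Ical = {x. aug x = 0}"
    and Ical_fg: "fin_gen (*) Ical {0}"
    and I_def: "I = \<phi> ` Ical"
    and iso: "inj_on \<phi> Ical"
    and quot_h: "\<And>l. Lamh l \<in> I \<longleftrightarrow> \<xi> dvd l"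
    and quot_h_surj: "\<And>b. \<exists>l. b - Lamh l \<in> I"
    and faithful: "\<And>b. (\<forall>x\<in>I. b * x = 0) \<Longrightarrow> b = 0"
  shows "aug ` fitting_ideal (*) Ical {0} = fitting_ideal (\<lambda>l x. Lamh l * x) I (ideal_sq I)
       \<and> fitting_ideal (\<lambda>l x. Lamh l * x) I (ideal_sq I) \<subseteq> {\<xi> * l | l. True}"
proof -
  obtain n g where gen: "generates (*) Ical {0} n g"
    using Ical_fg unfolding fin_gen_def by blast
  interpret eisenstein_augmentation \<phi> aug LamH Lamh Ical I \<xi> n g
    by (intro eisenstein_augmentation.intro eisenstein_augmentation_axioms.intro
        comm_ring_hom_if_is_ring_hom hom_\<phi> hom_aug surj_\<phi> compat aug_section Ical_def I_def
        iso quot_h faithful gen)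
  have "fitting_ideal (*) Ical {0} = fitting_wrt (*) {0} n g"
    using fitting_ideal_eq_fitting_wrt[OF comm_ring_hom_id is_ideal_zero, of Ical n g] gen by simp
  moreover have "fitting_ideal (hom_act Lamh) I (ideal_sq I)
      = fitting_wrt (hom_act Lamh) (ideal_sq I) n (\<phi> \<circ> g)"
    by (rule fitting_ideal_eq_fitting_wrt[OF comm_ring_hom_if_is_ring_hom[OF hom_Lamh]
          is_ideal_ideal_sq generates_mod_sq])
  ultimately show ?thesis
    using aug_fitting_wrt fitting_wrt_subset_multiples by simp
qed

end
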